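(* Let $q$ be a prime power, $k\ge 2$, and let $\mathcal{L}$ be a Cameron-Liebler $k$-set of $\mathrm{AG}(n,q)$ with parameter $x$. Let $0\le i\le k-2$, let $I$ be an $i$-dimensional subspace of $\pi_\infty$, and let $\pi$ be an $(n-i-1)$-dimensional subspace of $\mathrm{PG}(n,q)$ disjoint from $I$. Let $\pi_A=\pi\setminus(\pi\cap\pi_\infty)$, an affine space isomorphic to $\mathrm{AG}(n-i-1,q)$ with hyperplane at infinity $\pi\cap\pi_\infty$, and let $\mathcal{J}=\{K\cap\pi: K\in\mathcal{L},\ I\subseteq K\}$, a set of $(k-i-1)$-spaces of $\pi_A$. If $n\ge 2k-i$ (and $n\ge k+2$), then $\mathcal{J}$ is a Cameron-Liebler $(k-i-1)$-set of $\pi_A$ with parameter $x$.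
   Context: $\mathrm{AG}(n,q)$ is $\mathrm{PG}(n,q)$ with a hyperplane $\pi_\infty$ removed; affine points are points outside $\pi_\infty$, affine $k$-spaces are $k$-dimensional projective subspaces not contained in $\pi_\infty$. For an affine space $\mathrm{AG}(m,q)$ and $1\le j\le m-1$, with $A$ the incidence matrix of its affine points versus affine $j$-spaces, a set $\mathcal{M}$ of affine $j$-spaces is a Cameron-Liebler $j$-set if its characteristic vector lies in the real row space $\mathrm{Im}(A^T)$; its parameter is $|\mathcal{M}|/\left[{m\atop j}\right]_q$, where $\left[{a\atop b}\right]_q=\frac{(q^a-1)\cdots(q^{a-b+1}-1)}{(q^b-1)\cdots(q-1)}$. *)

theory Defs
  imports "HOL-Analysis.Analysis"
begin

text \<open>Model: PG(n,q) is the lattice of linear subspaces of the vector space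
  'a^'n over a finite field 'a (q = CARD('a)), with n = CARD('n) - 1.
  A projective d-space is a linear subspace of (vector) dimension d+1.\<close>

definition proj_subspaces :: "nat \<Rightarrow> ('a::field ^ 'n::finite) set \<Rightarrow> ('a ^ 'n) set set" where
  "proj_subspaces d U = {S. vec.subspace S \<and> S \<subseteq> U \<and> vec.dim S = d + 1}"

text \<open>Affine space determined by a projective space U (a linear subspace) with
  hyperplane at infinity H: affine points / affine j-spaces are the projective
  points / j-spaces of U not contained in H.\<close>

definition aff_points :: "('a::field ^ 'n::finite) set \<Rightarrow> ('a ^ 'n) set \<Rightarrow> ('a ^ 'n) set set" where
  "aff_points U H = {p \<in> proj_subspaces 0 U. \<not> p \<subseteq> H}"

definition aff_spaces :: "nat \<Rightarrow> ('a::field ^ 'n::finite) set \<Rightarrow> ('a ^ 'n) set \<Rightarrow> ('a ^ 'n) set set" where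
  "aff_spaces j U H = {K \<in> proj_subspaces j U. \<not> K \<subseteq> H}"

text \<open>Cameron-Liebler j-set: the characteristic vector of M lies in the real row
  space Im(A^T) of the point/j-space incidence matrix A, i.e. it equals A^T v for
  some real vector v indexed by affine points.\<close>

definition CL_set :: "nat \<Rightarrow> ('a::field ^ 'n::finite) set \<Rightarrow> ('a ^ 'n) set \<Rightarrow> ('a ^ 'n) set set \<Rightarrow> bool" where
  "CL_set j U H M \<longleftrightarrow> M \<subseteq> aff_spaces j U H \<and>
     (\<exists>v :: ('a ^ 'n) set \<Rightarrow> real. \<forall>K \<in> aff_spaces j U H.
        (if K \<in> M then 1 else 0) = (\<Sum>p \<in> aff_points U H. v p * (if p \<subseteq> K then 1 else 0)))"

definition qbinom :: "real \<Rightarrow> nat \<Rightarrow> nat \<Rightarrow> real" where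
  "qbinom q a b = (\<Prod>t<b. (q ^ (a - t) - 1) / (q ^ (t + 1) - 1))"

text \<open>Parameter of a CL j-set in the affine space with projective closure U,
  of dimension m = dim U - 1 (projective dimension).\<close>
definition CL_param :: "nat \<Rightarrow> ('a::{finite,field} ^ 'n::finite) set \<Rightarrow> ('a ^ 'n) set set \<Rightarrow> real" where
  "CL_param j U M = real (card M) / qbinom (real CARD('a)) (vec.dim U - 1) j"

end

theory Submission
  imports Defs
begin

text \<open>
  Project from the centre \<open>I\<close> onto \<open>\<pi>\<close>, a complement of \<open>I\<close>: a \<open>k\<close>-space \<open>K \<supseteq> I\<close> is
  \<open>I \<oplus> (K \<inter> \<pi>)\<close>, so \<open>K \<mapsto> K \<inter> \<pi>\<close> is a bijection onto the \<open>(k-i-1)\<close>-spaces of \<open>\<pi>\<close>, and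
  an affine point \<open>p\<close> lies in \<open>I + Y\<close> iff its image \<open>(I + p) \<inter> \<pi>\<close> lies in \<open>Y\<close>.
  Hence if \<open>\<chi>\<^sub>L = A\<^sup>T v\<close>, then \<open>\<chi>\<^sub>J = A\<^sub>\<pi>\<^sup>T w\<close> for the push-forward \<open>w\<close> of \<open>v\<close> along
  the projection, which has the same total weight.  Double counting point/space incidences
  shows that the parameter of a Cameron-Liebler set is the total weight of any such \<open>v\<close>,
  so both parameters agree.
\<close>

section \<open>Sums of subspaces\<close>

lemma set_plus_eq_sums: "A + B = {x + y |x y. x \<in> A \<and> y \<in> B}"
  by (auto simp: set_plus_def)

lemma subspace_set_plus:
  "vec.subspace S \<Longrightarrow> vec.subspace T \<Longrightarrow> vec.subspace (S + T)"
  unfolding set_plus_eq_sums by (rule vec.subspace_sums)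

lemma set_plus_subset_left: "vec.subspace T \<Longrightarrow> S \<subseteq> S + T"
  using vec.subspace_0 set_plus_intro[of _ S 0 T] by force

lemma set_plus_subset_right: "vec.subspace S \<Longrightarrow> T \<subseteq> S + T"
  using vec.subspace_0 set_plus_intro[of 0 S _ T] by force

lemma set_plus_least: "vec.subspace U \<Longrightarrow> S \<subseteq> U \<Longrightarrow> T \<subseteq> U \<Longrightarrow> S + T \<subseteq> U"
  by (auto simp: set_plus_def intro: vec.subspace_add)

lemma dim_set_plus_direct:
  assumes "vec.subspace S" "vec.subspace T" "S \<inter> T \<subseteq> {0}"
  shows "vec.dim (S + T) = vec.dim S + vec.dim T"
proof -
  have "vec.dim (S \<inter> T) = 0" using assms(3) by simp
  then show ?thesis using vec.dim_sums_Int[OF assms(1,2)] unfolding set_plus_eq_sums by linarith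
qed

lemma set_plus_eq_UNIV:
  fixes S T :: "('a::field ^ 'n) set"
  assumes "vec.subspace S" "vec.subspace T" "S \<inter> T \<subseteq> {0}"
    and "vec.dim S + vec.dim T = CARD('n)"
  shows "S + T = UNIV"
proof -
  have "vec.dim (S + T) = vec.dim (UNIV :: ('a ^ 'n) set)"
    unfolding vec_dim_card using dim_set_plus_direct[OF assms(1-3)] assms(4) by simp
  then show ?thesis
    using vec.subspace_dim_equal[OF subspace_set_plus[OF assms(1,2)] vec.subspace_UNIV] by simp
qed

lemma dim_1_Int_subset_0:
  assumes "vec.subspace p" "vec.dim p = 1" "vec.subspace S" "\<not> p \<subseteq> S"
  shows "p \<inter> S \<subseteq> {0}"
proof -
  have spans: "vec.span (p \<inter> S) = p \<inter> S" "vec.span p = p"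
    using assms by (simp_all add: vec.span_eq_iff vec.subspace_inter)
  have "vec.span (p \<inter> S) \<subset> vec.span p" unfolding spans using assms(4) by blast
  then have "vec.dim (p \<inter> S) < vec.dim p" by (rule vec.dim_psubset)
  then show ?thesis using assms(2) by simp
qed

lemma Int_set_plus_eq:
  assumes "vec.subspace X" "P \<subseteq> X"
  shows "X \<inter> (P + Q) = P + (X \<inter> Q)"
proof
  show "X \<inter> (P + Q) \<subseteq> P + (X \<inter> Q)"
  proof
    fix z assume z: "z \<in> X \<inter> (P + Q)"
    then obtain a b where ab: "z = a + b" "a \<in> P" "b \<in> Q" by (auto elim: set_plus_elim)
    have "b = z - a" using ab by simp
    moreover have "z - a \<in> X" using z ab assms by (intro vec.subspace_diff) auto
    ultimately show "z \<in> P + (X \<inter> Q)" using ab by auto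
  qed
  show "P + (X \<inter> Q) \<subseteq> X \<inter> (P + Q)"
    using assms by (auto simp: set_plus_def intro: vec.subspace_add)
qed

lemma set_plus_Int_complement:
  assumes "vec.subspace P" "vec.subspace Q" "Y \<subseteq> Q" "P \<inter> Q \<subseteq> {0}"
  shows "(P + Y) \<inter> Q = Y"
proof
  show "(P + Y) \<inter> Q \<subseteq> Y"
  proof
    fix z assume z: "z \<in> (P + Y) \<inter> Q"
    then obtain a b where ab: "z = a + b" "a \<in> P" "b \<in> Y" by (auto elim: set_plus_elim)
    have "a = z - b" using ab by simp
    moreover have "z - b \<in> Q" using z ab assms by (intro vec.subspace_diff) auto
    ultimately have "a = 0" using ab assms by auto
    then show "z \<in> Y" using ab by simp
  qed
  show "Y \<subseteq> (P + Y) \<inter> Q" using assms set_plus_subset_right by blast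
qed

lemma complement_subspace_exists:
  assumes "vec.subspace P" "vec.subspace U" "P \<subseteq> U"
  obtains Q where "vec.subspace Q" "P \<inter> Q = {0}" "P + Q = U"
    "vec.dim Q = vec.dim U - vec.dim P"
proof -
  obtain B where B: "B \<subseteq> P" "vec.independent B" "P \<subseteq> vec.span B" "card B = vec.dim P"
    by (rule vec.basis_exists)
  obtain C where C: "B \<subseteq> C" "C \<subseteq> U" "vec.independent C" "U \<subseteq> vec.span C"
    using vec.maximal_independent_subset_extend[of B U] B assms by blast
  define Q where "Q = vec.span (C - B)"
  have "vec.span B = P" "vec.span C = U"
    using B C assms vec.span_subspace by blast+
  have "P + Q = vec.span (B \<union> (C - B))"
    unfolding Q_def set_plus_eq_sums vec.span_Un \<open>vec.span B = P\<close> by simp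
  also have "B \<union> (C - B) = C" using C by blast
  finally have "P + Q = U" using \<open>vec.span C = U\<close> by simp
  have "finite C" using C vec.independent_bound_general by blast
  have "vec.dim U = card C" "vec.dim Q = card (C - B)"
    using \<open>vec.span C = U\<close> vec.dim_span_eq_card_independent vec.independent_mono[OF C(3)] C(3)
    unfolding Q_def by (metis, blast)
  then have dim_Q: "vec.dim Q = vec.dim U - vec.dim P"
    using B C \<open>finite C\<close> by (simp add: card_Diff_subset finite_subset)
  have "vec.subspace Q" unfolding Q_def by (rule vec.subspace_span)
  then have "vec.dim (P \<inter> Q) = 0"
    using vec.dim_sums_Int[OF assms(1), of Q] \<open>P + Q = U\<close> dim_Q vec.dim_subset[OF assms(3)]
    unfolding set_plus_eq_sums by simp
  then have "P \<inter> Q = {0}"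
    using assms(1) \<open>vec.subspace Q\<close> vec.subspace_0 by auto
  then show ?thesis using that \<open>vec.subspace Q\<close> \<open>P + Q = U\<close> dim_Q by blast
qed

lemma set_plus_Int_eq:
  assumes "vec.subspace X" "P \<subseteq> X" "X \<subseteq> P + Q"
  shows "P + (X \<inter> Q) = X"
  using Int_set_plus_eq[OF assms(1,2), of Q] assms(3) by blast

lemma dim_eq_dim_plus_dim_Int:
  assumes "vec.subspace P" "vec.subspace Q" "P \<inter> Q = {0}"
    and "vec.subspace X" "P \<subseteq> X" "X \<subseteq> P + Q"
  shows "vec.dim X = vec.dim P + vec.dim (X \<inter> Q)"
proof -
  have "vec.dim (P + (X \<inter> Q)) = vec.dim P + vec.dim (X \<inter> Q)"
    using assms by (intro dim_set_plus_direct vec.subspace_inter) auto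
  then show ?thesis using set_plus_Int_eq[OF assms(4-6)] by simp
qed

lemma bij_betw_subspaces_Int_complement:
  assumes "vec.subspace P" "vec.subspace Q" "P \<inter> Q = {0}"
  shows "bij_betw (\<lambda>X. X \<inter> Q)
           {X. vec.subspace X \<and> P \<subseteq> X \<and> X \<subseteq> P + Q \<and> vec.dim X = vec.dim P + e}
           {Y. vec.subspace Y \<and> Y \<subseteq> Q \<and> vec.dim Y = e}"
proof (rule bij_betw_byWitness[where f' = "\<lambda>Y. P + Y"])
  show "\<forall>X\<in>{X. vec.subspace X \<and> P \<subseteq> X \<and> X \<subseteq> P + Q \<and> vec.dim X = vec.dim P + e}.
          P + (X \<inter> Q) = X"
    using set_plus_Int_eq by blast
  show "\<forall>Y\<in>{Y. vec.subspace Y \<and> Y \<subseteq> Q \<and> vec.dim Y = e}. (P + Y) \<inter> Q = Y"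
    using set_plus_Int_complement assms by blast
  show "(\<lambda>X. X \<inter> Q) ` {X. vec.subspace X \<and> P \<subseteq> X \<and> X \<subseteq> P + Q \<and> vec.dim X = vec.dim P + e}
          \<subseteq> {Y. vec.subspace Y \<and> Y \<subseteq> Q \<and> vec.dim Y = e}"
    using dim_eq_dim_plus_dim_Int[OF assms] assms(2) vec.subspace_inter by auto
  show "(+) P ` {Y. vec.subspace Y \<and> Y \<subseteq> Q \<and> vec.dim Y = e}
          \<subseteq> {X. vec.subspace X \<and> P \<subseteq> X \<and> X \<subseteq> P + Q \<and> vec.dim X = vec.dim P + e}"
  proof clarify
    fix Y assume Y: "vec.subspace Y" "Y \<subseteq> Q"
    then have "P \<inter> Y \<subseteq> {0}" using assms(3) by blast
    then show "vec.subspace (P + Y) \<and> P \<subseteq> P + Y \<and> P + Y \<subseteq> P + Q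
        \<and> vec.dim (P + Y) = vec.dim P + vec.dim Y"
      using subspace_set_plus[OF assms(1) Y(1)] set_plus_subset_left[OF Y(1)]
        set_plus_mono2[OF order_refl Y(2)] dim_set_plus_direct[OF assms(1) Y(1)] by simp
  qed
qed

section \<open>Counting subspaces over a finite field\<close>

lemma card_subspace:
  fixes S :: "('a::{finite,field} ^ 'n) set"
  assumes "vec.subspace S"
  shows "card S = CARD('a) ^ vec.dim S"
proof -
  obtain B where B: "B \<subseteq> S" "vec.independent B" "S \<subseteq> vec.span B" "card B = vec.dim S"
    by (rule vec.basis_exists)
  define f where "f u = (\<Sum>v\<in>B. u v *s v)" for u :: "'a ^ 'n \<Rightarrow> 'a"
  have "S = vec.span B" using B assms vec.span_subspace by blast
  also have "\<dots> = range f" using vec.span_finite[of B] unfolding f_def by simp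
  also have "\<dots> = f ` (B \<rightarrow>\<^sub>E UNIV)"
  proof -
    have "f u \<in> f ` (B \<rightarrow>\<^sub>E UNIV)" for u
    proof -
      have "f u = f (restrict u B)" unfolding f_def by (rule sum.cong) auto
      then show ?thesis by simp
    qed
    then show ?thesis by auto
  qed
  finally have S: "S = f ` (B \<rightarrow>\<^sub>E UNIV)" .
  have "inj_on f (B \<rightarrow>\<^sub>E UNIV)"
  proof (rule inj_onI)
    fix u u' assume u: "u \<in> B \<rightarrow>\<^sub>E UNIV" "u' \<in> B \<rightarrow>\<^sub>E UNIV" and "f u = f u'"
    have "(\<Sum>v\<in>B. (u v - u' v) *s v) = f u - f u'"
      unfolding f_def by (simp add: vec.scale_left_diff_distrib sum_subtractf)
    then have combination: "(\<Sum>v\<in>B. (u v - u' v) *s v) = 0" using \<open>f u = f u'\<close> by simp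
    have independent: "(\<Sum>v\<in>B. c v *s v) = 0 \<Longrightarrow> v \<in> B \<Longrightarrow> c v = 0" for c v
      using B(2) vec.independent_explicit[of B] by blast
    have "\<forall>v\<in>B. u v = u' v"
      using independent[OF combination] by simp
    then show "u = u'" using u by (metis PiE_ext)
  qed
  then have "card S = card (B \<rightarrow>\<^sub>E (UNIV :: 'a set))" using S card_image by blast
  then show ?thesis using B(4) by (simp add: card_PiE)
qed

lemma card_field_ge_2: "2 \<le> CARD('a::{finite,field})"
  using card_mono[of UNIV "{0::'a, 1}"] by simp

lemma qbinom_0 [simp]: "qbinom q a 0 = 1"
  unfolding qbinom_def by simp

lemma qbinom_Suc:
  "qbinom q m (Suc d) = (q ^ m - 1) / (q ^ Suc d - 1) * qbinom q (m - 1) d"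
proof -
  have "qbinom q m (Suc d) = (\<Prod>t<Suc d. q ^ (m - t) - 1) / (\<Prod>t<Suc d. q ^ (t + 1) - 1)"
    unfolding qbinom_def by (rule prod_dividef)
  also have "\<dots> = (q ^ m - 1) / (q ^ Suc d - 1)
                 * ((\<Prod>t<d. q ^ (m - 1 - t) - 1) / (\<Prod>t<d. q ^ (t + 1) - 1))"
    unfolding prod.lessThan_Suc_shift[of "\<lambda>t. q ^ (m - t) - 1"] prod.lessThan_Suc
    by (simp add: diff_diff_left)
  also have "(\<Prod>t<d. q ^ (m - 1 - t) - 1) / (\<Prod>t<d. q ^ (t + 1) - 1) = qbinom q (m - 1) d"
    unfolding qbinom_def by (rule prod_dividef[symmetric])
  finally show ?thesis .
qed

lemma qbinom_pos:
  assumes "q > 1" "b \<le> a"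
  shows "qbinom q a b > 0"
  unfolding qbinom_def
proof (rule prod_pos)
  fix t assume "t \<in> {..<b}"
  then have "q ^ (a - t) > 1" "q ^ (t + 1) > 1" using assms by (intro one_less_power; simp)+
  then show "(q ^ (a - t) - 1) / (q ^ (t + 1) - 1) > 0" by simp
qed

lemma card_subspaces_of_dim:
  fixes U :: "('a::{finite,field} ^ 'n) set"
  assumes "vec.subspace U"
  shows "real (card {S. vec.subspace S \<and> S \<subseteq> U \<and> vec.dim S = d})
           = qbinom (real CARD('a)) (vec.dim U) d"
  using assms
proof (induction d arbitrary: U)
  case 0
  have "{S. vec.subspace S \<and> S \<subseteq> U \<and> vec.dim S = 0} = {{0}}"
    using "0" vec.subspace_0 vec.subspace_single_0 by fastforce
  then show ?case by simp
next
  case (Suc d)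
  define q where "q = real CARD('a)"
  have "q > 1" using card_field_ge_2[where 'a = 'a] unfolding q_def by simp
  define Sub where "Sub = {S. vec.subspace S \<and> S \<subseteq> U \<and> vec.dim S = Suc d}"
  have card_nonzero: "real (card (S - {0})) = q ^ vec.dim S - 1"
    if "vec.subspace S" for S :: "('a ^ 'n) set"
    using card_subspace[OF that] vec.subspace_0[OF that]
    by (simp add: q_def card_Diff_singleton of_nat_diff)
  have card_containing: "real (card {S \<in> Sub. x \<in> S}) = qbinom q (vec.dim U - 1) d"
    if x: "x \<in> U - {0}" for x
  proof -
    let ?P = "vec.span {x}"
    have P: "vec.subspace ?P" "vec.dim ?P = 1" "?P \<subseteq> U"
      using x vec.span_minimal[of "{x}" U] Suc.prems by auto
    obtain Q where Q: "vec.subspace Q" "?P \<inter> Q = {0}" "?P + Q = U"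
      "vec.dim Q = vec.dim U - 1"
      using complement_subspace_exists[OF P(1) Suc.prems P(3)] P(2) by metis
    have "x \<in> S \<longleftrightarrow> ?P \<subseteq> S" if "vec.subspace S" for S
      using vec.span_minimal[of "{x}" S] vec.span_base[of x "{x}"] that by blast
    then have "{S \<in> Sub. x \<in> S}
        = {S. vec.subspace S \<and> ?P \<subseteq> S \<and> S \<subseteq> ?P + Q \<and> vec.dim S = vec.dim ?P + d}"
      unfolding Sub_def P(2) Q(3) by auto
    then have "card {S \<in> Sub. x \<in> S} = card {T. vec.subspace T \<and> T \<subseteq> Q \<and> vec.dim T = d}"
      using bij_betw_same_card[OF bij_betw_subspaces_Int_complement[OF P(1) Q(1,2)]] by simp
    then show ?thesis using Q(4) Suc.IH[OF Q(1)] unfolding q_def by simp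
  qed
  \<comment> \<open>double counting the pairs \<open>(x, S)\<close> with \<open>x\<close> a nonzero vector of \<open>S\<close>\<close>
  have "(\<Sum>S\<in>Sub. card {x \<in> U - {0}. x \<in> S}) = (\<Sum>x\<in>U - {0}. card {S \<in> Sub. x \<in> S})"
    using sum.swap_restrict[of Sub "U - {0}" "\<lambda>_ _. 1::nat" "\<lambda>S x. x \<in> S"] by simp
  moreover have "{x \<in> U - {0}. x \<in> S} = S - {0}" if "S \<in> Sub" for S
    using that unfolding Sub_def by blast
  ultimately have "(\<Sum>S\<in>Sub. real (card (S - {0}))) = (\<Sum>x\<in>U - {0}. real (card {S \<in> Sub. x \<in> S}))"
    by (metis (no_types, lifting) of_nat_sum sum.cong)
  then have "real (card Sub) * (q ^ Suc d - 1) = (q ^ vec.dim U - 1) * qbinom q (vec.dim U - 1) d"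
    using card_nonzero[OF Suc.prems] card_containing card_nonzero by (simp add: Sub_def)
  moreover have "q ^ Suc d - 1 > 0" using one_less_power[OF \<open>q > 1\<close>, of "Suc d"] by simp
  ultimately have "real (card Sub) = (q ^ vec.dim U - 1) / (q ^ Suc d - 1) * qbinom q (vec.dim U - 1) d"
    by (simp add: field_simps)
  then show ?case unfolding Sub_def q_def qbinom_Suc .
qed

lemma card_subspaces_containing:
  fixes P U :: "('a::{finite,field} ^ 'n) set"
  assumes "vec.subspace P" "vec.subspace U" "P \<subseteq> U"
  shows "real (card {S. vec.subspace S \<and> P \<subseteq> S \<and> S \<subseteq> U \<and> vec.dim S = vec.dim P + e})
           = qbinom (real CARD('a)) (vec.dim U - vec.dim P) e"
proof -
  obtain Q where Q: "vec.subspace Q" "P \<inter> Q = {0}" "P + Q = U" "vec.dim Q = vec.dim U - vec.dim P"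
    using complement_subspace_exists[OF assms] .
  show ?thesis
    using bij_betw_same_card[OF bij_betw_subspaces_Int_complement[OF assms(1) Q(1,2)]]
      card_subspaces_of_dim[OF Q(1)] Q(3,4) by simp
qed

section \<open>Cameron-Liebler sets and their parameter\<close>

lemma mem_aff_spaces_iff:
  "K \<in> aff_spaces j U H \<longleftrightarrow> vec.subspace K \<and> K \<subseteq> U \<and> vec.dim K = j + 1 \<and> \<not> K \<subseteq> H"
  unfolding aff_spaces_def proj_subspaces_def by auto

lemma aff_points_eq_aff_spaces_0: "aff_points U H = aff_spaces 0 U H"
  unfolding aff_points_def aff_spaces_def ..

lemma card_aff_spaces_containing_point:
  fixes U :: "('a::{finite,field} ^ 'n) set"
  assumes "vec.subspace U" "p \<in> aff_points U H"
  shows "real (card {K \<in> aff_spaces j U H. p \<subseteq> K}) = qbinom (real CARD('a)) (vec.dim U - 1) j"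
proof -
  have p: "vec.subspace p" "p \<subseteq> U" "vec.dim p = 1" "\<not> p \<subseteq> H"
    using assms(2) by (simp_all add: aff_points_eq_aff_spaces_0 mem_aff_spaces_iff)
  then have "{K \<in> aff_spaces j U H. p \<subseteq> K}
      = {S. vec.subspace S \<and> p \<subseteq> S \<and> S \<subseteq> U \<and> vec.dim S = vec.dim p + j}"
    by (auto simp: mem_aff_spaces_iff)
  then show ?thesis using card_subspaces_containing[OF p(1) assms(1) p(2)] p(3) by simp
qed

definition CL_weight ::
  "nat \<Rightarrow> ('a::field ^ 'n) set \<Rightarrow> ('a ^ 'n) set \<Rightarrow> ('a ^ 'n) set set \<Rightarrow> (('a ^ 'n) set \<Rightarrow> real) \<Rightarrow> bool"
  where "CL_weight j U H M v \<longleftrightarrow> (\<forall>K \<in> aff_spaces j U H.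
    (if K \<in> M then 1 else 0) = (\<Sum>p \<in> aff_points U H. v p * (if p \<subseteq> K then 1 else 0)))"

lemma CL_set_iff: "CL_set j U H M \<longleftrightarrow> M \<subseteq> aff_spaces j U H \<and> (\<exists>v. CL_weight j U H M v)"
  unfolding CL_set_def CL_weight_def ..

lemma card_CL_set:
  fixes U :: "('a::{finite,field} ^ 'n) set"
  assumes "vec.subspace U" "M \<subseteq> aff_spaces j U H" "CL_weight j U H M v"
  shows "real (card M) = (\<Sum>p \<in> aff_points U H. v p) * qbinom (real CARD('a)) (vec.dim U - 1) j"
proof -
  have "real (card M) = (\<Sum>K \<in> aff_spaces j U H. if K \<in> M then 1 else 0)"
    using assms(2) by (simp add: sum.If_cases Int_absorb1)
  also have "\<dots> = (\<Sum>K \<in> aff_spaces j U H. \<Sum>p \<in> aff_points U H. v p * (if p \<subseteq> K then 1 else 0))"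
    using assms(3) unfolding CL_weight_def by simp
  also have "\<dots> = (\<Sum>p \<in> aff_points U H. v p * real (card {K \<in> aff_spaces j U H. p \<subseteq> K}))"
    by (subst sum.swap) (simp add: sum_distrib_left[symmetric] sum.If_cases Int_def conj_commute)
  also have "\<dots> = (\<Sum>p \<in> aff_points U H. v p * qbinom (real CARD('a)) (vec.dim U - 1) j)"
    using card_aff_spaces_containing_point[OF assms(1)] by simp
  finally show ?thesis by (simp add: sum_distrib_right)
qed

lemma CL_param_eq_weight_sum:
  fixes U :: "('a::{finite,field} ^ 'n) set"
  assumes "vec.subspace U" "j < vec.dim U" "M \<subseteq> aff_spaces j U H" "CL_weight j U H M v"
  shows "CL_param j U M = (\<Sum>p \<in> aff_points U H. v p)"
proof -
  have "qbinom (real CARD('a)) (vec.dim U - 1) j > 0"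
    using card_field_ge_2[where 'a = 'a] assms(2) by (intro qbinom_pos) auto
  then show ?thesis using card_CL_set[OF assms(1,3,4)] unfolding CL_param_def by simp
qed

section \<open>Projection from a subspace\<close>

locale central_projection =
  fixes I \<pi> H U :: "('a::{finite,field} ^ 'n) set" and i :: nat
  assumes subspace_I: "vec.subspace I" and subspace_\<pi>: "vec.subspace \<pi>"
    and subspace_H: "vec.subspace H"
    and I_Int_\<pi>: "I \<inter> \<pi> = {0}" and I_plus_\<pi>: "I + \<pi> = U"
    and I_subset_H: "I \<subseteq> H" and dim_I: "vec.dim I = i + 1"
begin

definition project :: "('a ^ 'n) set \<Rightarrow> ('a ^ 'n) set"
  where "project p = (I + p) \<inter> \<pi>"

lemma Int_mem_aff_spaces:
  assumes "K \<in> aff_spaces k U H" "I \<subseteq> K" "i < k"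
  shows "K \<inter> \<pi> \<in> aff_spaces (k - i - 1) \<pi> (\<pi> \<inter> H)" and "I + (K \<inter> \<pi>) = K"
proof -
  have K: "vec.subspace K" "K \<subseteq> I + \<pi>" "vec.dim K = k + 1" "\<not> K \<subseteq> H"
    using assms(1) I_plus_\<pi> by (simp_all add: mem_aff_spaces_iff)
  show K_eq: "I + (K \<inter> \<pi>) = K"
    using set_plus_Int_eq[OF K(1) assms(2) K(2)] .
  have "vec.dim K = vec.dim I + vec.dim (K \<inter> \<pi>)"
    using dim_eq_dim_plus_dim_Int[OF subspace_I subspace_\<pi> I_Int_\<pi> K(1) assms(2) K(2)] .
  moreover have "\<not> K \<inter> \<pi> \<subseteq> H"
    using K_eq K(4) set_plus_least[OF subspace_H I_subset_H] by auto
  ultimately show "K \<inter> \<pi> \<in> aff_spaces (k - i - 1) \<pi> (\<pi> \<inter> H)"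
    using K assms(3) dim_I vec.subspace_inter[OF K(1) subspace_\<pi>] by (auto simp: mem_aff_spaces_iff)
qed

lemma set_plus_mem_aff_spaces:
  assumes "Y \<in> aff_spaces (k - i - 1) \<pi> (\<pi> \<inter> H)" "i < k"
  shows "I + Y \<in> aff_spaces k U H" and "I \<subseteq> I + Y" and "(I + Y) \<inter> \<pi> = Y"
proof -
  have Y: "vec.subspace Y" "Y \<subseteq> \<pi>" "vec.dim Y = k - i" "\<not> Y \<subseteq> H"
    using assms by (auto simp: mem_aff_spaces_iff)
  show "I \<subseteq> I + Y" using set_plus_subset_left[OF Y(1)] .
  show "(I + Y) \<inter> \<pi> = Y"
    using set_plus_Int_complement[OF subspace_I subspace_\<pi> Y(2)] I_Int_\<pi> by simp
  have "vec.dim (I + Y) = (i + 1) + (k - i)"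
    using dim_set_plus_direct[OF subspace_I Y(1)] I_Int_\<pi> Y(2,3) dim_I by auto
  moreover have "I + Y \<subseteq> U" using I_plus_\<pi> set_plus_mono2[OF order_refl Y(2)] by blast
  moreover have "\<not> I + Y \<subseteq> H" using set_plus_subset_right[OF subspace_I, of Y] Y(4) by blast
  ultimately show "I + Y \<in> aff_spaces k U H"
    using subspace_set_plus[OF subspace_I Y(1)] assms(2) by (simp add: mem_aff_spaces_iff)
qed

lemma project_mem_aff_points:
  assumes "p \<in> aff_points U H"
  shows "project p \<in> aff_points \<pi> (\<pi> \<inter> H)" and "p \<subseteq> I + project p"
proof -
  have p: "vec.subspace p" "p \<subseteq> U" "vec.dim p = 1" "\<not> p \<subseteq> H"
    using assms by (simp_all add: aff_points_eq_aff_spaces_0 mem_aff_spaces_iff)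
  have "p \<inter> I \<subseteq> {0}"
    using dim_1_Int_subset_0[OF p(1,3) subspace_I] p(4) I_subset_H by blast
  then have "vec.dim (I + p) = (i + 1) + 1"
    using dim_set_plus_direct[OF subspace_I p(1)] dim_I p(3) by (simp add: Int_commute)
  moreover have "I + p \<subseteq> U"
    using set_plus_least[OF subspace_set_plus[OF subspace_I subspace_\<pi>]] I_plus_\<pi> p(2)
      set_plus_subset_left[OF subspace_\<pi>] by blast
  moreover have "p \<subseteq> I + p" using set_plus_subset_right[OF subspace_I] .
  ultimately have "I + p \<in> aff_spaces (i + 1) U H"
    using subspace_set_plus[OF subspace_I p(1)] p(4) by (auto simp: mem_aff_spaces_iff)
  then show "project p \<in> aff_points \<pi> (\<pi> \<inter> H)" "p \<subseteq> I + project p"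
    using Int_mem_aff_spaces[of "I + p" "i + 1"] \<open>p \<subseteq> I + p\<close> set_plus_subset_left[OF p(1)]
    by (simp_all add: project_def aff_points_eq_aff_spaces_0)
qed

lemma subset_set_plus_iff_project_subset:
  assumes "p \<in> aff_points U H" "vec.subspace Y" "Y \<subseteq> \<pi>"
  shows "p \<subseteq> I + Y \<longleftrightarrow> project p \<subseteq> Y"
proof
  assume "p \<subseteq> I + Y"
  then have "I + p \<subseteq> I + Y"
    using set_plus_least[OF subspace_set_plus[OF subspace_I assms(2)]]
      set_plus_subset_left[OF assms(2)] by blast
  then show "project p \<subseteq> Y"
    using set_plus_Int_complement[OF subspace_I subspace_\<pi> assms(3)] I_Int_\<pi>
    unfolding project_def by auto
next
  assume "project p \<subseteq> Y"
  then show "p \<subseteq> I + Y"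
    using project_mem_aff_points(2)[OF assms(1)] set_plus_mono2[OF order_refl, of _ Y I] by blast
qed

definition projected_weight :: "(('a ^ 'n) set \<Rightarrow> real) \<Rightarrow> ('a ^ 'n) set \<Rightarrow> real"
  where "projected_weight v p' = (\<Sum>p \<in> {p \<in> aff_points U H. project p = p'}. v p)"

lemma sum_projected_weight_mult:
  "(\<Sum>p' \<in> aff_points \<pi> (\<pi> \<inter> H). projected_weight v p' * f p')
     = (\<Sum>p \<in> aff_points U H. v p * f (project p))"
proof -
  have "(\<Sum>p' \<in> aff_points \<pi> (\<pi> \<inter> H). projected_weight v p' * f p')
      = (\<Sum>p' \<in> aff_points \<pi> (\<pi> \<inter> H). \<Sum>p \<in> {p \<in> aff_points U H. project p = p'}. v p * f (project p))"
    unfolding projected_weight_def sum_distrib_right by (intro sum.cong) auto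
  also have "\<dots> = (\<Sum>p \<in> aff_points U H. v p * f (project p))"
    using project_mem_aff_points(1) by (intro sum.group) auto
  finally show ?thesis .
qed

lemma CL_weight_projection:
  assumes "i < k" "M \<subseteq> aff_spaces k U H" "CL_weight k U H M v"
  shows "CL_weight (k - i - 1) \<pi> (\<pi> \<inter> H) ((\<lambda>K. K \<inter> \<pi>) ` {K \<in> M. I \<subseteq> K}) (projected_weight v)"
  unfolding CL_weight_def
proof
  fix Y assume Y: "Y \<in> aff_spaces (k - i - 1) \<pi> (\<pi> \<inter> H)"
  then have "vec.subspace Y" "Y \<subseteq> \<pi>" by (simp_all add: mem_aff_spaces_iff)
  note lift = set_plus_mem_aff_spaces[OF Y assms(1)]
  have "Y \<in> (\<lambda>K. K \<inter> \<pi>) ` {K \<in> M. I \<subseteq> K} \<longleftrightarrow> I + Y \<in> M"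
    using lift Int_mem_aff_spaces(2) assms(1,2) by (force simp: image_iff)
  then have "(if Y \<in> (\<lambda>K. K \<inter> \<pi>) ` {K \<in> M. I \<subseteq> K} then 1 else 0)
      = (\<Sum>p \<in> aff_points U H. v p * (if p \<subseteq> I + Y then 1 else 0))"
    using assms(3) lift(1) unfolding CL_weight_def by simp
  also have "\<dots> = (\<Sum>p \<in> aff_points U H. v p * (if project p \<subseteq> Y then 1 else 0))"
    using subset_set_plus_iff_project_subset[OF _ \<open>vec.subspace Y\<close> \<open>Y \<subseteq> \<pi>\<close>] by simp
  also have "\<dots> = (\<Sum>p' \<in> aff_points \<pi> (\<pi> \<inter> H). projected_weight v p' * (if p' \<subseteq> Y then 1 else 0))"
    by (rule sum_projected_weight_mult[symmetric])
  finally show "(if Y \<in> (\<lambda>K. K \<inter> \<pi>) ` {K \<in> M. I \<subseteq> K} then 1 else 0)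
      = (\<Sum>p' \<in> aff_points \<pi> (\<pi> \<inter> H). projected_weight v p' * (if p' \<subseteq> Y then 1 else 0))" .
qed

lemma sum_projected_weight:
  "(\<Sum>p' \<in> aff_points \<pi> (\<pi> \<inter> H). projected_weight v p') = (\<Sum>p \<in> aff_points U H. v p)"
  using sum_projected_weight_mult[of v "\<lambda>_. 1"] by simp

lemma image_Int_subset_aff_spaces:
  assumes "i < k" "M \<subseteq> aff_spaces k U H"
  shows "(\<lambda>K. K \<inter> \<pi>) ` {K \<in> M. I \<subseteq> K} \<subseteq> aff_spaces (k - i - 1) \<pi> (\<pi> \<inter> H)"
  using Int_mem_aff_spaces(1) assms by blast

end

theorem theorem6p13:
  fixes Hinf I \<pi> :: "('a::{finite,field} ^ 'n::finite) set"
    and L :: "('a ^ 'n) set set"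
    and n k i :: nat and x :: real
  assumes n_def: "n = CARD('n) - 1"
    and Hinf: "Hinf \<in> proj_subspaces (n - 1) UNIV"
    and k: "k \<ge> 2"
    and L: "CL_set k UNIV Hinf L"
    and x: "x = CL_param k UNIV L"
    and i: "i \<le> k - 2"
    and I: "I \<in> proj_subspaces i Hinf"
    and pi: "\<pi> \<in> proj_subspaces (n - i - 1) UNIV"
    and disj: "I \<inter> \<pi> = {0}"
    and n1: "n \<ge> 2 * k - i"
    and n2: "n \<ge> k + 2"
  shows "CL_set (k - i - 1) \<pi> (\<pi> \<inter> Hinf) ((\<lambda>K. K \<inter> \<pi>) ` {K \<in> L. I \<subseteq> K})
         \<and> CL_param (k - i - 1) \<pi> ((\<lambda>K. K \<inter> \<pi>) ` {K \<in> L. I \<subseteq> K}) = x"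
proof -
  have subspaces: "vec.subspace Hinf" "vec.subspace I" "vec.subspace \<pi>" and "I \<subseteq> Hinf"
    and dim_I: "vec.dim I = i + 1" and dim_\<pi>: "vec.dim \<pi> = n - i"
    using Hinf I pi i k n2 unfolding proj_subspaces_def by auto
  have "i < k" using i k by simp
  have "CARD('n) = n + 1" using n_def by simp
  then have "I + \<pi> = UNIV"
    using set_plus_eq_UNIV[of I \<pi>] subspaces disj dim_I dim_\<pi> \<open>i < k\<close> n2 by simp
  then interpret central_projection I \<pi> Hinf UNIV i
    using subspaces disj \<open>I \<subseteq> Hinf\<close> dim_I by unfold_locales
  obtain v where L_sub: "L \<subseteq> aff_spaces k UNIV Hinf" and v: "CL_weight k UNIV Hinf L v"
    using L unfolding CL_set_iff by blast
  note J_sub = image_Int_subset_aff_spaces[OF \<open>i < k\<close> L_sub]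
    and J_weight = CL_weight_projection[OF \<open>i < k\<close> L_sub v]
  have "CL_param (k - i - 1) \<pi> ((\<lambda>K. K \<inter> \<pi>) ` {K \<in> L. I \<subseteq> K})
      = (\<Sum>p \<in> aff_points \<pi> (\<pi> \<inter> Hinf). projected_weight v p)"
    using dim_\<pi> n2 \<open>i < k\<close> by (intro CL_param_eq_weight_sum subspaces(3) J_sub J_weight) auto
  also have "\<dots> = (\<Sum>p \<in> aff_points UNIV Hinf. v p)"
    by (rule sum_projected_weight)
  also have "\<dots> = x"
  proof -
    have "k < vec.dim (UNIV :: ('a ^ 'n) set)"
      unfolding vec_dim_card using \<open>CARD('n) = n + 1\<close> n2 by simp
    then show ?thesis using CL_param_eq_weight_sum[OF vec.subspace_UNIV _ L_sub v] x by simp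
  qed
  finally show ?thesis using J_sub J_weight unfolding CL_set_iff by blast
qed

end
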